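(* Let $k$ be a positive integer. If $T$ is a semi-complete digraph with $n$ vertices that admits an ordering of cost at most $k$, then the number of $(4k)^{2/3}$-cuts of $T$ is at most $$A\cdot\exp\Bigl(2C\,(4k)^{1/3}\sqrt{1+\ln\bigl(2(4k)^{2/3}\bigr)}\Bigr)\cdot(n+1),$$ where $C=\pi\sqrt{2/3}$ and $A$ is a constant such that $p(m)\le\frac{A}{m+1}\exp(C\sqrt{m})$ for all integers $m\ge0$.
   Context: A simple digraph (no loops, no multiple arcs) $T$ is semi-complete if for every pair of distinct vertices $v,w$ at least one of $(v,w),(w,v)$ is an arc. The cost of an ordering $(v_1,\dots,v_n)$ of $V(T)$ is $\sum_{(v_i,v_j)\in E(T),\,i>j}(i-j)$. For real $d\ge 0$, a $d$-cut of a digraph $T$ is an ordered partition $(X,Y)$ of $V(T)$ (either part may be empty) such that there are at most $d$ arcs $(u,v)\in E(T)$ with $u\in Y$ and $v\in X$. $p(m)$ denotes the number of partitions of the integer $m$; such $A$ exists by the Hardy–Ramanujan estimate. *)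

theory Defs
  imports "HOL-Analysis.Analysis" "HOL-Library.Multiset"
begin

definition semi_complete :: "'a set \<Rightarrow> ('a \<times> 'a) set \<Rightarrow> bool" where
  "semi_complete V E \<longleftrightarrow> finite V \<and> E \<subseteq> V \<times> V \<and> (\<forall>v. (v, v) \<notin> E) \<and>
     (\<forall>v\<in>V. \<forall>w\<in>V. v \<noteq> w \<longrightarrow> (v, w) \<in> E \<or> (w, v) \<in> E)"

text \<open>An ordering of V is a list of the vertices without repetitions; positions are
  0-based here, which does not affect the differences i - j.\<close>

definition is_ordering :: "'a set \<Rightarrow> 'a list \<Rightarrow> bool" where
  "is_ordering V vs \<longleftrightarrow> distinct vs \<and> set vs = V"

definition ordering_cost :: "('a \<times> 'a) set \<Rightarrow> 'a list \<Rightarrow> nat" where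
  "ordering_cost E vs =
     (\<Sum>(i, j) \<in> {(i, j). i < length vs \<and> j < i \<and> (vs ! i, vs ! j) \<in> E}. i - j)"

definition d_cut :: "'a set \<Rightarrow> ('a \<times> 'a) set \<Rightarrow> real \<Rightarrow> 'a set \<times> 'a set \<Rightarrow> bool" where
  "d_cut V E d XY \<longleftrightarrow> (case XY of (X, Y) \<Rightarrow>
      X \<union> Y = V \<and> X \<inter> Y = {} \<and>
      real (card {(u, v) \<in> E. u \<in> Y \<and> v \<in> X}) \<le> d)"

definition num_d_cuts :: "'a set \<Rightarrow> ('a \<times> 'a) set \<Rightarrow> real \<Rightarrow> nat" where
  "num_d_cuts V E d = card {XY. d_cut V E d XY}"

definition partition_number :: "nat \<Rightarrow> nat" where
  "partition_number m = card {M :: nat multiset. (\<forall>x \<in># M. 0 < x) \<and> sum_mset M = m}"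

end

theory Submission
  imports Defs
begin

text \<open>Fix an ordering of cost at most k and identify a cut (X, Y) with the set S of positions
  of X. For j in S let g(j) be the number of positions of Y before j. Each pair i < j with i in Y,
  j in X is either an arc from Y to X, of which there are at most d, or a backward arc of the
  ordering, contributing j - i to its cost; so at most d + k/L of these pairs have length at least
  L. If g(j) >= 2L, at least half of the pairs ending in j are long, while the short pairs ending
  in a j with g(j) < 2L start in one of the first 2L positions of Y. Hence
  sum g(j) <= 2d + 2k/L + 2L^2. Since the multiset of the values g(j) determines S, the cut is
  determined by |S|, by sum g(j) and by a partition of M = floor (2d + 2k/L + 2L^2), which
  leaves at most (n + 1)(M + 1) p(M) cuts. The choice L = ceiling ((4k)^(1/3)) makes
  M <= 4 (4k)^(2/3) (1 + ln (2 (4k)^(2/3))).\<close>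

lemma card_less_nth_strict_sorted:
  fixes xs :: "'a::linorder list"
  assumes "sorted_wrt (<) xs" "r < length xs"
  shows "card {x \<in> set xs. x < xs ! r} = r"
proof -
  have "{x \<in> set xs. x < xs ! r} = set (take r xs)"
  proof (intro set_eqI iffI)
    fix x assume "x \<in> {x \<in> set xs. x < xs ! r}"
    then obtain s where s: "s < length xs" "xs ! s = x" "x < xs ! r"
      by (auto simp: in_set_conv_nth)
    then have "s < r"
      using assms sorted_wrt_iff_nth_less[of "(<)" xs]
      by (metis linorder_neqE_nat order.asym)
    then show "x \<in> set (take r xs)" using s by (auto simp: in_set_conv_nth)
  next
    fix x assume "x \<in> set (take r xs)"
    then obtain s where "s < r" "xs ! s = x" using assms(2) by (auto simp: in_set_conv_nth)
    then show "x \<in> {x \<in> set xs. x < xs ! r}"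
      using assms by (auto simp: sorted_wrt_nth_less)
  qed
  moreover have "distinct (take r xs)" using assms(1) by (simp add: strict_sorted_iff)
  ultimately show ?thesis using assms(2) by (simp add: distinct_card)
qed

lemma nat_mset_eqI_positive_part:
  fixes M N :: "nat multiset"
  assumes "size M = size N" and "filter_mset ((<) 0) M = filter_mset ((<) 0) N"
  shows "M = N"
proof (rule multiset_eqI)
  have size_split: "size K = size (filter_mset ((<) 0) K) + count K 0" for K :: "nat multiset"
  proof -
    have "filter_mset (\<lambda>v. \<not> 0 < v) K = {#v \<in># K. v = 0#}" by (rule filter_mset_cong) auto
    then show ?thesis
      by (metis filter_eq_replicate_mset multiset_partition size_replicate_mset size_union)
  qed
  fix x
  show "count M x = count N x"
  proof (cases "x = 0")
    case True
    then show ?thesis using size_split[of M] size_split[of N] assms by simp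
  next
    case False
    then show ?thesis using arg_cong[OF assms(2), of "\<lambda>K. count K x"] by simp
  qed
qed

lemma sum_mset_filter_positive: "sum_mset (filter_mset ((<) 0) M) = sum_mset (M :: nat multiset)"
  by (induction M) auto

lemma finite_partitions: "finite {M :: nat multiset. (\<forall>x \<in># M. 0 < x) \<and> sum_mset M = m}"
proof (rule finite_subset)
  show "{M :: nat multiset. (\<forall>x \<in># M. 0 < x) \<and> sum_mset M = m}
      \<subseteq> (\<Union>s\<le>m. multisets_of_size {..m} s)"
  proof clarify
    fix M :: "nat multiset" assume pos: "\<forall>x \<in># M. 0 < x"
    have "size M \<le> sum_mset M" using pos by (induction M) auto
    moreover have "set_mset M \<subseteq> {..sum_mset M}"
      by (auto dest!: multi_member_split)
    ultimately show "M \<in> (\<Union>s\<le>sum_mset M. multisets_of_size {..sum_mset M} s)"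
      by (auto simp: multisets_of_size_def)
  qed
qed (simp add: finite_multisets_of_size)

definition gaps_below :: "nat set \<Rightarrow> nat \<Rightarrow> nat" where
  "gaps_below S j = card {i. i < j \<and> i \<notin> S}"

definition gap_profile :: "nat set \<Rightarrow> nat multiset" where
  "gap_profile S = image_mset (gaps_below S) (mset_set S)"

lemma gaps_below_mono: "j \<le> j' \<Longrightarrow> gaps_below S j \<le> gaps_below S j'"
  unfolding gaps_below_def by (rule card_mono) auto

lemma gaps_below_strict_mono: "i < j \<Longrightarrow> i \<notin> S \<Longrightarrow> gaps_below S i < gaps_below S j"
  unfolding gaps_below_def by (rule psubset_card_mono) auto

lemma nth_sorted_list_of_set_eq:
  assumes "finite S" "r < card S"
  shows "sorted_list_of_set S ! r = r + gaps_below S (sorted_list_of_set S ! r)"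
proof -
  let ?p = "sorted_list_of_set S ! r"
  have "{..<?p} = {i \<in> S. i < ?p} \<union> {i. i < ?p \<and> i \<notin> S}" by auto
  then have "?p = card ({i \<in> S. i < ?p} \<union> {i. i < ?p \<and> i \<notin> S})"
    by (metis card_lessThan)
  also have "\<dots> = card {i \<in> S. i < ?p} + gaps_below S ?p"
    unfolding gaps_below_def by (rule card_Un_disjoint) auto
  also have "card {i \<in> S. i < ?p} = r"
    using card_less_nth_strict_sorted[of "sorted_list_of_set S" r] assms by simp
  finally show ?thesis .
qed

lemma gap_profile_inject:
  assumes "finite S" "finite T" "gap_profile S = gap_profile T"
  shows "S = T"
proof -
  have gap_list: "map (gaps_below U) (sorted_list_of_set U) = sorted_list_of_multiset (gap_profile U)"
    if "finite U" for U
  proof -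
    have "sorted_wrt (\<le>) (sorted_list_of_set U)" by simp
    then have "sorted_wrt (\<lambda>x y. gaps_below U x \<le> gaps_below U y) (sorted_list_of_set U)"
      by (rule sorted_wrt_mono_rel[rotated]) (auto intro: gaps_below_mono)
    then have "sorted (map (gaps_below U) (sorted_list_of_set U))" by (simp add: sorted_map)
    moreover have "gap_profile U = mset (map (gaps_below U) (sorted_list_of_set U))"
      unfolding gap_profile_def by (metis mset_map mset_sorted_list_of_multiset sorted_list_of_mset_set)
    ultimately show ?thesis by (metis sorted_list_of_multiset_mset sorted_sort_id)
  qed
  then have lists: "map (gaps_below S) (sorted_list_of_set S) = map (gaps_below T) (sorted_list_of_set T)"
    using assms by simp
  then have card: "card S = card T" by (metis length_map length_sorted_list_of_set)
  have "sorted_list_of_set S = sorted_list_of_set T"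
  proof (rule nth_equalityI)
    show "length (sorted_list_of_set S) = length (sorted_list_of_set T)" using card by simp
    fix r assume "r < length (sorted_list_of_set S)"
    then have "r < card S" "r < card T" using card by auto
    moreover have "gaps_below S (sorted_list_of_set S ! r) = gaps_below T (sorted_list_of_set T ! r)"
      using arg_cong[OF lists, of "\<lambda>xs. xs ! r"] \<open>r < card S\<close> \<open>r < card T\<close> by simp
    ultimately show "sorted_list_of_set S ! r = sorted_list_of_set T ! r"
      using nth_sorted_list_of_set_eq assms(1,2) by metis
  qed
  then show ?thesis using assms(1,2) by (metis set_sorted_list_of_set)
qed

lemma sum_mset_gap_profile: "sum_mset (gap_profile S) = (\<Sum>j\<in>S. gaps_below S j)"
  unfolding gap_profile_def by (metis sum_unfold_sum_mset)

lemma size_gap_profile: "size (gap_profile S) = card S"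
  unfolding gap_profile_def by simp

definition crossing_pairs :: "nat set \<Rightarrow> (nat \<times> nat) set" where
  "crossing_pairs S = (SIGMA j:S. {i. i < j \<and> i \<notin> S})"

lemma finite_crossing_pairs: "finite S \<Longrightarrow> finite (crossing_pairs S)"
  unfolding crossing_pairs_def by auto

lemma card_crossing_pairs_filter:
  assumes "finite S"
  shows "card {(j, i) \<in> crossing_pairs S. Q j i} = (\<Sum>j\<in>S. card {i. i < j \<and> i \<notin> S \<and> Q j i})"
proof -
  have "{(j, i) \<in> crossing_pairs S. Q j i} = (SIGMA j:S. {i. i < j \<and> i \<notin> S \<and> Q j i})"
    unfolding crossing_pairs_def by auto
  then show ?thesis using assms by simp
qed

lemma card_long_pairs_le:
  fixes P F :: "(nat \<times> nat) set"
  assumes "finite P" "F \<subseteq> P" "(\<Sum>(j, i)\<in>P - F. j - i) \<le> k"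
  shows "L * card {(j, i) \<in> P. i + L \<le> j} \<le> L * card F + k"
proof -
  let ?Long = "{(j, i) \<in> P. i + L \<le> j}"
  have "L * card (?Long - F) = (\<Sum>(j, i)\<in>?Long - F. L)" by simp
  also have "\<dots> \<le> (\<Sum>(j, i)\<in>?Long - F. j - i)" by (rule sum_mono) auto
  also have "\<dots> \<le> (\<Sum>(j, i)\<in>P - F. j - i)" by (rule sum_mono2) (use assms(1) in auto)
  finally have "L * card (?Long - F) \<le> k" using assms(3) by linarith
  have "F \<union> (?Long - F) \<subseteq> P" using assms(2) by auto
  then have "finite (F \<union> (?Long - F))" using assms(1) by (rule finite_subset)
  then have "card ?Long \<le> card (F \<union> (?Long - F))" by (rule card_mono) auto
  also have "\<dots> \<le> card F + card (?Long - F)" by (rule card_Un_le)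
  finally have "L * card ?Long \<le> L * (card F + card (?Long - F))" by (rule mult_le_mono2)
  also have "\<dots> = L * card F + L * card (?Long - F)" by (rule distrib_left)
  finally show ?thesis using \<open>L * card (?Long - F) \<le> k\<close> by linarith
qed

lemma card_short_pairs_le:
  assumes "finite S"
  shows "card {(j, i) \<in> crossing_pairs S. j < i + L \<and> gaps_below S j < 2 * L} \<le> 2 * L * L"
proof -
  define R where "R = {i. i \<notin> S \<and> gaps_below S i < 2 * L}"
  have inj: "inj_on (gaps_below S) R"
  proof (rule inj_onI)
    fix x y assume "x \<in> R" "y \<in> R" "gaps_below S x = gaps_below S y"
    then show "x = y" unfolding R_def
      by (metis gaps_below_strict_mono linorder_neqE_nat mem_Collect_eq order.irrefl)
  qed
  have R_image: "gaps_below S ` R \<subseteq> {..<2 * L}" unfolding R_def by auto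
  have "finite R" using finite_imageD[OF finite_subset[OF R_image] inj] by simp
  have "card R \<le> 2 * L" using card_inj_on_le[OF inj R_image] by simp
  have "{(j, i) \<in> crossing_pairs S. j < i + L \<and> gaps_below S j < 2 * L}
      \<subseteq> (\<lambda>(i, j). (j, i)) ` (SIGMA i:R. {i..<i + L})"
  proof clarify
    fix j i assume "(j, i) \<in> crossing_pairs S" "j < i + L" "gaps_below S j < 2 * L"
    moreover from this have "gaps_below S i < gaps_below S j"
      unfolding crossing_pairs_def by (auto intro: gaps_below_strict_mono)
    ultimately show "(j, i) \<in> (\<lambda>(i, j). (j, i)) ` (SIGMA i:R. {i..<i + L})"
      unfolding R_def crossing_pairs_def by force
  qed
  then have "card {(j, i) \<in> crossing_pairs S. j < i + L \<and> gaps_below S j < 2 * L}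
      \<le> card ((\<lambda>(i, j). (j, i)) ` (SIGMA i:R. {i..<i + L}))"
    by (rule card_mono[rotated]) (use \<open>finite R\<close> in auto)
  also have "\<dots> \<le> card (SIGMA i:R. {i..<i + L})" by (rule card_image_le) (use \<open>finite R\<close> in auto)
  also have "\<dots> = card R * L" using \<open>finite R\<close> by simp
  also have "\<dots> \<le> 2 * L * L" using \<open>card R \<le> 2 * L\<close> by simp
  finally show ?thesis .
qed

lemma gaps_below_le_long_short:
  "gaps_below S j \<le> 2 * card {i. i < j \<and> i \<notin> S \<and> i + L \<le> j}
     + card {i. i < j \<and> i \<notin> S \<and> j < i + L \<and> gaps_below S j < 2 * L}"
proof -
  let ?lo = "card {i. i < j \<and> i \<notin> S \<and> i + L \<le> j}"
  let ?sh = "card {i. i < j \<and> i \<notin> S \<and> j < i + L}"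
  have "{i. i < j \<and> i \<notin> S}
      = {i. i < j \<and> i \<notin> S \<and> i + L \<le> j} \<union> {i. i < j \<and> i \<notin> S \<and> j < i + L}"
    by auto
  then have "gaps_below S j = ?lo + ?sh"
    unfolding gaps_below_def by (simp add: card_Un_disjoint disjoint_iff)
  moreover have "?sh \<le> L"
  proof -
    have "?sh \<le> card {j - L..<j}" by (rule card_mono) auto
    then show ?thesis by simp
  qed
  ultimately show ?thesis by (cases "gaps_below S j < 2 * L") auto
qed

lemma sum_gaps_below_le:
  assumes "finite S" "F \<subseteq> crossing_pairs S" "(\<Sum>(j, i)\<in>crossing_pairs S - F. j - i) \<le> k"
  shows "L * (\<Sum>j\<in>S. gaps_below S j) \<le> 2 * L * card F + 2 * k + 2 * L ^ 3"
proof -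
  let ?Long = "{(j, i) \<in> crossing_pairs S. i + L \<le> j}"
  let ?Short = "{(j, i) \<in> crossing_pairs S. j < i + L \<and> gaps_below S j < 2 * L}"
  have "(\<Sum>j\<in>S. gaps_below S j)
      \<le> (\<Sum>j\<in>S. 2 * card {i. i < j \<and> i \<notin> S \<and> i + L \<le> j}
          + card {i. i < j \<and> i \<notin> S \<and> j < i + L \<and> gaps_below S j < 2 * L})"
    by (rule sum_mono) (rule gaps_below_le_long_short)
  also have "\<dots> = 2 * card ?Long + card ?Short"
    by (simp add: card_crossing_pairs_filter assms(1) sum.distrib sum_distrib_left)
  finally have "(\<Sum>j\<in>S. gaps_below S j) \<le> 2 * card ?Long + card ?Short" .
  then have "L * (\<Sum>j\<in>S. gaps_below S j) \<le> L * (2 * card ?Long + card ?Short)"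
    by (rule mult_le_mono2)
  also have "\<dots> = 2 * (L * card ?Long) + L * card ?Short" by (simp add: algebra_simps)
  also have "\<dots> \<le> 2 * (L * card F + k) + L * (2 * L * L)"
    using card_long_pairs_le[OF finite_crossing_pairs[OF assms(1)] assms(2,3), of L]
      card_short_pairs_le[OF assms(1), of L]
    by (intro add_mono mult_le_mono) auto
  finally show ?thesis by (simp add: algebra_simps power3_eq_cube)
qed

definition positions :: "'a list \<Rightarrow> 'a set \<Rightarrow> nat set" where
  "positions vs X = {j. j < length vs \<and> vs ! j \<in> X}"

lemma finite_positions: "finite (positions vs X)"
  unfolding positions_def by auto

lemma nth_image_positions: "X \<subseteq> set vs \<Longrightarrow> (!) vs ` positions vs X = X"
  unfolding positions_def by (auto simp: in_set_conv_nth image_iff) (metis in_set_conv_nth subsetD)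

lemma card_forward_pairs_le_card_cut_arcs:
  assumes "semi_complete V E" "is_ordering V vs" "X \<union> Y = V"
  shows "card {(j, i) \<in> crossing_pairs (positions vs X). (vs ! i, vs ! j) \<in> E}
    \<le> card {(u, v) \<in> E. u \<in> Y \<and> v \<in> X}"
proof (rule card_inj_on_le)
  have "distinct vs" using assms(2) by (simp add: is_ordering_def)
  then show "inj_on (\<lambda>(j, i). (vs ! i, vs ! j))
      {(j, i) \<in> crossing_pairs (positions vs X). (vs ! i, vs ! j) \<in> E}"
    by (auto intro!: inj_onI simp: crossing_pairs_def positions_def nth_eq_iff_index_eq)
  show "(\<lambda>(j, i). (vs ! i, vs ! j)) ` {(j, i) \<in> crossing_pairs (positions vs X). (vs ! i, vs ! j) \<in> E}
      \<subseteq> {(u, v) \<in> E. u \<in> Y \<and> v \<in> X}"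
    using assms(2,3) by (auto simp: crossing_pairs_def positions_def is_ordering_def)
  have "{(u, v) \<in> E. u \<in> Y \<and> v \<in> X} \<subseteq> V \<times> V" "finite (V \<times> V)"
    using assms(1) by (auto simp: semi_complete_def)
  then show "finite {(u, v) \<in> E. u \<in> Y \<and> v \<in> X}" by (rule finite_subset)
qed

lemma backward_pairs_sum_le_ordering_cost:
  assumes "semi_complete V E" "is_ordering V vs"
  shows "(\<Sum>(j, i)\<in>{(j, i) \<in> crossing_pairs (positions vs X). (vs ! i, vs ! j) \<notin> E}. j - i)
    \<le> ordering_cost E vs"
  unfolding ordering_cost_def
proof (rule sum_mono2)
  show "finite {(i, j). i < length vs \<and> j < i \<and> (vs ! i, vs ! j) \<in> E}"
    by (rule finite_subset[of _ "{..<length vs} \<times> {..<length vs}"]) auto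
  show "{(j, i) \<in> crossing_pairs (positions vs X). (vs ! i, vs ! j) \<notin> E}
      \<subseteq> {(i, j). i < length vs \<and> j < i \<and> (vs ! i, vs ! j) \<in> E}"
  proof clarify
    fix j i assume "(j, i) \<in> crossing_pairs (positions vs X)" "(vs ! i, vs ! j) \<notin> E"
    then have ij: "i < j" "j < length vs" "(vs ! i, vs ! j) \<notin> E"
      by (auto simp: crossing_pairs_def positions_def)
    have "distinct vs" "set vs = V" using assms(2) by (auto simp: is_ordering_def)
    then have "vs ! i \<noteq> vs ! j" "vs ! i \<in> V" "vs ! j \<in> V"
      using ij by (auto simp: nth_eq_iff_index_eq)
    then have "(vs ! j, vs ! i) \<in> E" using ij(3) assms(1) by (auto simp: semi_complete_def)
    then show "j < length vs \<and> i < j \<and> (vs ! j, vs ! i) \<in> E" using ij by simp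
  qed
qed auto

lemma d_cut_sum_gaps_below_le:
  assumes "semi_complete V E" "is_ordering V vs" "ordering_cost E vs \<le> k"
    and "d_cut V E d (X, Y)" "1 \<le> L"
  shows "real (\<Sum>j\<in>positions vs X. gaps_below (positions vs X) j)
    \<le> 2 * d + 2 * real k / real L + 2 * real L ^ 2"
proof -
  let ?S = "positions vs X"
  define F where "F = {(j, i) \<in> crossing_pairs ?S. (vs ! i, vs ! j) \<in> E}"
  have "crossing_pairs ?S - F = {(j, i) \<in> crossing_pairs ?S. (vs ! i, vs ! j) \<notin> E}"
    unfolding F_def by auto
  then have cost: "(\<Sum>(j, i)\<in>crossing_pairs ?S - F. j - i) \<le> k"
    using order_trans[OF backward_pairs_sum_le_ordering_cost[OF assms(1,2), of X] assms(3)]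
    by simp
  define s where "s = (\<Sum>j\<in>?S. gaps_below ?S j)"
  have "L * s \<le> 2 * L * card F + 2 * k + 2 * L ^ 3"
    unfolding s_def using cost
    by (intro sum_gaps_below_le) (auto simp: finite_positions F_def)
  then have "real L * real s \<le> 2 * real L * real (card F) + 2 * real k + 2 * real L ^ 3"
    using of_nat_mono by fastforce
  also have "\<dots> \<le> 2 * real L * d + 2 * real k + 2 * real L ^ 3"
  proof -
    have "real (card F) \<le> d"
      using card_forward_pairs_le_card_cut_arcs[OF assms(1,2), of X Y] assms(4)
      unfolding F_def d_cut_def by auto
    then show ?thesis by (simp add: mult_left_mono)
  qed
  also have "\<dots> = real L * (2 * d + 2 * real k / real L + 2 * real L ^ 2)"
    using assms(5) by (simp add: field_simps power2_eq_square power3_eq_cube)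
  finally have "real L * real s \<le> real L * (2 * d + 2 * real k / real L + 2 * real L ^ 2)" .
  moreover have "0 < real L" using assms(5) by simp
  ultimately show ?thesis unfolding s_def by (rule mult_le_cancel_left_pos[THEN iffD1, rotated])
qed

definition gap_code :: "nat \<Rightarrow> nat set \<Rightarrow> nat \<times> nat \<times> nat multiset" where
  "gap_code M S = (card S, sum_mset (gap_profile S),
     filter_mset ((<) 0) (gap_profile S) + replicate_mset (M - sum_mset (gap_profile S)) 1)"

text \<open>The sum is recorded so that the padding by ones can be removed again.\<close>

lemma gap_code_inject:
  assumes "finite S" "finite T" "gap_code M S = gap_code M T"
  shows "S = T"
proof -
  have card: "card S = card T" and sum: "sum_mset (gap_profile S) = sum_mset (gap_profile T)"
    and padded: "filter_mset ((<) 0) (gap_profile S) + replicate_mset (M - sum_mset (gap_profile S)) 1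
      = filter_mset ((<) 0) (gap_profile T) + replicate_mset (M - sum_mset (gap_profile T)) 1"
    using assms(3) unfolding gap_code_def prod.inject by blast+
  have "size (gap_profile S) = size (gap_profile T)" using card by (simp only: size_gap_profile)
  moreover have "filter_mset ((<) 0) (gap_profile S) = filter_mset ((<) 0) (gap_profile T)"
    using padded unfolding sum by (simp only: add_right_cancel)
  ultimately have "gap_profile S = gap_profile T" by (rule nat_mset_eqI_positive_part)
  then show ?thesis by (rule gap_profile_inject[OF assms(1,2)])
qed

lemma gap_code_mem_partitions:
  assumes "card S \<le> n" "sum_mset (gap_profile S) \<le> M"
  shows "gap_code M S \<in> {..n} \<times> {..M} \<times> {P. (\<forall>x \<in># P. 0 < x) \<and> sum_mset P = M}"
  using assms by (auto simp: gap_code_def sum_mset_filter_positive)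

lemma d_cut_eq_positions:
  assumes "is_ordering V vs" "d_cut V E d (X, Y)"
  shows "X = (!) vs ` positions vs X" "Y = V - X"
proof -
  have "X \<union> Y = V" "X \<inter> Y = {}" using assms(2) by (simp_all add: d_cut_def)
  moreover have "set vs = V" using assms(1) by (simp add: is_ordering_def)
  ultimately show "X = (!) vs ` positions vs X" "Y = V - X"
    using nth_image_positions[of X vs] by blast+
qed

lemma inj_on_positions_d_cuts:
  assumes "is_ordering V vs"
  shows "inj_on (\<lambda>XY. positions vs (fst XY)) {XY. d_cut V E d XY}"
proof (rule inj_onI)
  fix XY1 XY2 :: "'a set \<times> 'a set"
  assume cuts: "XY1 \<in> {XY. d_cut V E d XY}" "XY2 \<in> {XY. d_cut V E d XY}"
    and eq: "positions vs (fst XY1) = positions vs (fst XY2)"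
  obtain X1 Y1 X2 Y2 where XY: "XY1 = (X1, Y1)" "XY2 = (X2, Y2)" by fastforce
  show "XY1 = XY2"
    using d_cut_eq_positions[OF assms, of E d X1 Y1] d_cut_eq_positions[OF assms, of E d X2 Y2]
      cuts eq unfolding XY by simp
qed

lemma num_d_cuts_le_partition_number:
  assumes "semi_complete V E" "is_ordering V vs" "ordering_cost E vs \<le> k" "1 \<le> L"
    and "2 * d + 2 * real k / real L + 2 * real L ^ 2 < real M + 1"
  shows "num_d_cuts V E d \<le> (card V + 1) * (M + 1) * partition_number M"
proof -
  let ?cuts = "{XY. d_cut V E d XY}"
  let ?code = "\<lambda>XY. gap_code M (positions vs (fst XY))"
  let ?target = "{..length vs} \<times> {..M} \<times> {P. (\<forall>x \<in># P. 0 < x) \<and> sum_mset P = M}"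
  have "?code ` ?cuts \<subseteq> ?target"
  proof (rule image_subsetI)
    fix XY assume "XY \<in> ?cuts"
    obtain X Y where XY: "XY = (X, Y)" by fastforce
    with \<open>XY \<in> ?cuts\<close> have "d_cut V E d (X, Y)" by simp
    then have "real (sum_mset (gap_profile (positions vs X))) < real M + 1"
      using d_cut_sum_gaps_below_le[OF assms(1-3) \<open>d_cut V E d (X, Y)\<close> assms(4)] assms(5)
      unfolding sum_mset_gap_profile by linarith
    then have "sum_mset (gap_profile (positions vs X)) \<le> M" by linarith
    moreover have "card (positions vs X) \<le> card {..<length vs}"
      by (rule card_mono) (auto simp: positions_def)
    ultimately show "?code XY \<in> ?target" unfolding XY by (intro gap_code_mem_partitions) auto
  qed
  moreover have "inj_on ?code ?cuts"
  proof (rule inj_onI)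
    fix XY1 XY2 assume cuts: "XY1 \<in> ?cuts" "XY2 \<in> ?cuts" and "?code XY1 = ?code XY2"
    then have "positions vs (fst XY1) = positions vs (fst XY2)"
      by (intro gap_code_inject[OF finite_positions finite_positions]) simp
    from inj_onD[OF inj_on_positions_d_cuts[OF assms(2)] this cuts] show "XY1 = XY2" .
  qed
  ultimately have "card ?cuts \<le> card ?target"
    using finite_partitions[of M] by (intro card_inj_on_le) auto
  moreover have "length vs = card V" using assms(2) by (auto simp: is_ordering_def distinct_card)
  ultimately show ?thesis
    by (simp add: num_d_cuts_def card_cartesian_product partition_number_def algebra_simps)
qed

lemma cube_root_budget_le:
  fixes k :: nat and c :: real
  assumes "0 < k" and c: "c ^ 3 = 4 * real k" "0 < c"
  shows "2 * c\<^sup>2 + 2 * real k / real (nat \<lceil>c\<rceil>) + 2 * real (nat \<lceil>c\<rceil>) ^ 2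
    \<le> 4 * c\<^sup>2 * (1 + ln (2 * c\<^sup>2))"
proof -
  have "c \<ge> 79 / 50"
  proof (rule ccontr)
    assume "\<not> c \<ge> 79 / 50"
    then have "c ^ 3 < (79 / 50) ^ 3" using c(2) by (intro power_strict_mono) auto
    also have "(79 / 50) ^ 3 < (4 :: real)" by (simp add: power3_eq_cube)
    finally show False using c(1) assms(1) by simp
  qed
  have "2 * real k / real (nat \<lceil>c\<rceil>) \<le> 2 * real k / c"
    using c(2) assms(1) by (intro divide_left_mono) auto
  also have "\<dots> = c\<^sup>2 / 2" using c by (simp add: field_simps power3_eq_cube power2_eq_square)
  finally have k_term: "2 * real k / real (nat \<lceil>c\<rceil>) \<le> c\<^sup>2 / 2" .
  have L_term: "real (nat \<lceil>c\<rceil>) ^ 2 \<le> (c + 1)\<^sup>2"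
    using c(2) by (intro power_mono) linarith+
  have "2 * c\<^sup>2 + 2 * real k / real (nat \<lceil>c\<rceil>) + 2 * real (nat \<lceil>c\<rceil>) ^ 2
      \<le> 2 * c\<^sup>2 + c\<^sup>2 / 2 + 2 * (c + 1)\<^sup>2"
    using k_term L_term by (intro add_mono add_left_mono mult_left_mono) simp_all
  also have "\<dots> \<le> 8 * c\<^sup>2"
  proof -
    have "79 / 50 * c \<le> c * c" using \<open>c \<ge> 79 / 50\<close> c(2) by (intro mult_right_mono) auto
    moreover have "(c + 1) * (c + 1) = c * c + 2 * c + 1" by (simp add: algebra_simps)
    ultimately show ?thesis using \<open>c \<ge> 79 / 50\<close> unfolding power2_eq_square by linarith
  qed
  also have "\<dots> \<le> 4 * c\<^sup>2 * (1 + ln (2 * c\<^sup>2))"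
  proof -
    have "exp 1 \<le> (3 :: real)" using exp_le by simp
    also have "3 \<le> 2 * c\<^sup>2"
      using mult_mono[OF \<open>c \<ge> 79 / 50\<close> \<open>c \<ge> 79 / 50\<close>] c(2)
      by (simp add: power2_eq_square)
    finally have "1 \<le> ln (2 * c\<^sup>2)" using c(2) by (simp add: ln_ge_iff)
    then have "4 * c\<^sup>2 * 2 \<le> 4 * c\<^sup>2 * (1 + ln (2 * c\<^sup>2))" by (intro mult_left_mono) auto
    then show ?thesis by simp
  qed
  finally show ?thesis .
qed

lemma le_partition_bound_exp:
  fixes A B C :: real
  assumes "N \<le> n * (M + 1) * partition_number M"
    and "\<forall>m::nat. real (partition_number m) \<le> A / real (m + 1) * exp (C * sqrt (real m))"
    and "0 \<le> C" "sqrt (real M) \<le> B"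
  shows "real N \<le> A * exp (C * B) * real n"
proof -
  have "real (partition_number 0) \<le> A" using assms(2)[rule_format, of 0] by simp
  then have "0 \<le> A" using of_nat_0_le_iff order_trans by blast
  have "real N \<le> real n * (real (M + 1) * real (partition_number M))"
    using assms(1) by (metis of_nat_le_iff of_nat_mult mult.assoc)
  also have "\<dots> \<le> real n * (A * exp (C * sqrt (real M)))"
    using assms(2)[rule_format, of M] by (intro mult_left_mono) (simp_all add: field_simps)
  also have "\<dots> \<le> real n * (A * exp (C * B))"
    using assms(3,4) \<open>0 \<le> A\<close> by (intro mult_left_mono) (auto intro: mult_left_mono)
  finally show ?thesis by (simp add: mult_ac)
qed

theorem mainTheorem14:
  fixes V :: "'a set" and E :: "('a \<times> 'a) set" and k :: nat and A :: real
  assumes "0 < k"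
    and "semi_complete V E"
    and "\<exists>vs. is_ordering V vs \<and> ordering_cost E vs \<le> k"
    and "\<forall>m::nat. real (partition_number m)
            \<le> A / real (m + 1) * exp (pi * sqrt (2 / 3) * sqrt (real m))"
  shows "real (num_d_cuts V E ((4 * real k) powr (2 / 3)))
    \<le> A * exp (2 * (pi * sqrt (2 / 3)) * (4 * real k) powr (1 / 3)
              * sqrt (1 + ln (2 * (4 * real k) powr (2 / 3))))
      * real (card V + 1)"
proof -
  obtain vs where vs: "is_ordering V vs" "ordering_cost E vs \<le> k" using assms(3) by blast
  define c where "c = (4 * real k) powr (1 / 3)"
  define L where "L = nat \<lceil>c\<rceil>"
  define M where "M = nat \<lfloor>2 * c\<^sup>2 + 2 * real k / real L + 2 * real L ^ 2\<rfloor>"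
  have c: "0 < c" "c ^ 3 = 4 * real k" "(4 * real k) powr (2 / 3) = c\<^sup>2"
    using assms(1) by (simp_all add: c_def powr_power)
  have "real M \<le> 2 * c\<^sup>2 + 2 * real k / real L + 2 * real L ^ 2"
    unfolding M_def by (rule of_nat_floor) simp
  also have "\<dots> \<le> 4 * c\<^sup>2 * (1 + ln (2 * c\<^sup>2))"
    unfolding L_def by (rule cube_root_budget_le[OF assms(1) c(2,1)])
  finally have "sqrt (real M) \<le> sqrt (4 * c\<^sup>2 * (1 + ln (2 * c\<^sup>2)))" by (rule real_sqrt_le_mono)
  also have "\<dots> = 2 * c * sqrt (1 + ln (2 * c\<^sup>2))" using c(1) by (simp add: real_sqrt_mult)
  finally have sqrt_M: "sqrt (real M) \<le> 2 * c * sqrt (1 + ln (2 * c\<^sup>2))" .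
  have "1 \<le> L" using c(1) unfolding L_def by linarith
  moreover have "2 * c\<^sup>2 + 2 * real k / real L + 2 * real L ^ 2 < real M + 1"
    unfolding M_def by linarith
  ultimately have "num_d_cuts V E (c\<^sup>2) \<le> (card V + 1) * (M + 1) * partition_number M"
    by (rule num_d_cuts_le_partition_number[OF assms(2) vs])
  from le_partition_bound_exp[OF this assms(4) _ sqrt_M] show ?thesis
    unfolding c(3) c_def[symmetric] by (simp add: mult_ac)
qed

end
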